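(* Let $f(t)=\sum_{n=1}^{\infty}t^{n}/n^{n}=t\int_0^1 x^{-tx}\,dx$. Then, as $t\to+\infty$, $$f(t)=\sqrt{\frac{2\pi t}{e}}\left(1-\frac{e}{24t}+O(t^{-2})\right)\exp\frac{t}{e}.$$
   Context: $x^{-tx}=\exp(-tx\ln x)$ for $x\in(0,1]$. *)

theory Defs
  imports "HOL-Analysis.Analysis" "HOL-Library.Landau_Symbols"
begin

definition sd_f :: "real \<Rightarrow> real" where
  "sd_f t = (\<Sum>n. t ^ (Suc n) / (real (Suc n)) ^ (Suc n))"

end

theory Submission
  imports Defs "HOL-Probability.Distributions" "HOL-Real_Asymp.Real_Asymp"
begin

text \<open>Expanding \<open>exp (t * (- x * ln x))\<close> and integrating termwise gives the sophomore's dream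
  \<open>\<integral>[0,1] x^(-t x) dx = (\<Sum>n. t^n / (n + 1)^(n + 1))\<close>, hence the integral representation of
  \<open>sd_f\<close>. The substitution \<open>x = (1 + y) / e\<close> turns it into \<open>sd_f t = L e^L \<integral> exp (- L h y) dy\<close> with
  \<open>L = t / e\<close> and \<open>h y = (1 + y) ln (1 + y) - y\<close>, and Laplace's method applies: \<open>h \<ge> 1/16\<close> away
  from \<open>[-1/2, 1/2]\<close>, while on that interval \<open>exp (- L h y)\<close> is \<open>exp (- L y^2 / 2)\<close> times an explicit
  polynomial in \<open>L\<close> and \<open>y\<close>, up to an error whose integral is \<open>O(L^(-5/2))\<close>. The odd part of that
  polynomial integrates to zero, and the Gaussian moments of the even part give
  \<open>sqrt (2 pi / L) * (1 - 1 / (24 L))\<close>.\<close>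

section \<open>The integral representation\<close>

lemma continuous_on_Icc_at_rightI:
  fixes f :: "real \<Rightarrow> real"
  assumes "(f \<longlongrightarrow> f a) (at_right a)" and "\<And>x. a < x \<Longrightarrow> x \<le> b \<Longrightarrow> isCont f x"
  shows "continuous_on {a..b} f"
proof (cases "a < b")
  case True
  have "continuous (at x within {a..b}) f" if "x \<in> {a..b}" for x
  proof (cases "x = a")
    case True
    with \<open>a < b\<close> show ?thesis using assms(1) by (simp add: continuous_within at_within_Icc_at_right)
  next
    case False
    with that show ?thesis using assms(2) by (auto intro: continuous_at_imp_continuous_within)
  qed
  then show ?thesis by (simp add: continuous_on_eq_continuous_within)
next
  case False
  then have "{a..b} = {} \<or> {a..b} = {a}" by auto
  then show ?thesis by auto
qed

lemma minus_ln_le_inverse: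
  fixes x :: real
  assumes "0 < x"
  shows "- ln x \<le> 1 / x"
  using ln_le_minus_one[of "1 / x"] assms by (simp add: ln_div)

lemma power_mult_minus_ln_power_le:
  fixes x :: real
  assumes "0 < x" "x \<le> 1" "j \<le> m"
  shows "x ^ (m + 1) * (- ln x) ^ j \<le> x"
proof -
  have "(- ln x) ^ j \<le> (1 / x) ^ j"
    using assms minus_ln_le_inverse[of x] by (intro power_mono) auto
  then have "x ^ (m + 1) * (- ln x) ^ j \<le> x ^ (m + 1) * (1 / x) ^ j"
    using assms by (intro mult_left_mono) auto
  also have "\<dots> = x ^ (m + 1 - j)"
    using assms by (simp add: power_diff power_one_over field_simps)
  also have "\<dots> \<le> x ^ 1"
    using assms by (intro power_decreasing) auto
  finally show ?thesis by simp
qed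

lemma tendsto_power_mult_minus_ln_power:
  assumes "j \<le> m"
  shows "((\<lambda>x::real. x ^ (m + 1) * (- ln x) ^ j) \<longlongrightarrow> 0) (at_right 0)"
proof (rule tendsto_sandwich[of "\<lambda>_. 0" _ _ "\<lambda>x. x"])
  have ev: "\<forall>\<^sub>F x in at_right 0. 0 < x \<and> x < (1::real)"
    using eventually_at_right_real[OF zero_less_one] by (simp add: eventually_mono)
  show "\<forall>\<^sub>F x in at_right 0. 0 \<le> x ^ (m + 1) * (- ln (x::real)) ^ j"
    by (rule eventually_mono[OF ev]) simp
  show "\<forall>\<^sub>F x in at_right 0. x ^ (m + 1) * (- ln x) ^ j \<le> (x::real)"
    by (rule eventually_mono[OF ev]) (use assms power_mult_minus_ln_power_le in auto)
qed (auto intro: tendsto_ident_at)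

lemma has_integral_power_mult_minus_ln_power:
  assumes "j \<le> m"
  shows "((\<lambda>x::real. x ^ m * (- ln x) ^ j) has_integral fact j / (real m + 1) ^ (j + 1)) {0..1}"
  using assms
proof (induction j)
  case 0
  have "((\<lambda>x. x ^ Suc m / real (Suc m)) has_real_derivative x ^ m) (at x within {0..1})" for x :: real
    using DERIV_cdivide[OF DERIV_pow[of "Suc m" x "{0..1}"], of "real (Suc m)"] by simp
  then have "((\<lambda>x::real. x ^ m) has_integral (1 ^ Suc m / real (Suc m) - 0 ^ Suc m / real (Suc m))) {0..1}"
    by (intro fundamental_theorem_of_calculus) (auto simp: has_real_derivative_iff_has_vector_derivative)
  then show ?case by (simp add: add.commute)
next
  case (Suc j)
  define G where "G x = x ^ Suc m * (- ln x) ^ Suc j / real (Suc m)" for x :: real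
  define g where "g x = x ^ m * (- ln x) ^ Suc j - real (Suc j) / real (Suc m) * (x ^ m * (- ln x) ^ j)"
    for x :: real
  have "continuous_on {0..1} G"
  proof (rule continuous_on_Icc_at_rightI)
    show "(G \<longlongrightarrow> G 0) (at_right 0)"
      using tendsto_divide[OF tendsto_power_mult_minus_ln_power tendsto_const, of "Suc j" m "real (Suc m)"]
        Suc.prems by (simp add: G_def [abs_def])
  qed (auto simp: G_def [abs_def] intro!: continuous_intros)
  moreover have "(G has_vector_derivative g x) (at x)" if "0 < x" for x
  proof -
    have "((\<lambda>x. x ^ Suc m * (- ln x) ^ Suc j) has_real_derivative
        real (Suc m) * (x ^ m * (- ln x) ^ Suc j) - real (Suc j) * (x ^ m * (- ln x) ^ j)) (at x)"
      using that by (auto intro!: derivative_eq_intros simp del: power_Suc simp: power_Suc[of x m] field_simps)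
    from DERIV_cdivide[OF this, of "real (Suc m)"] show ?thesis
      by (simp add: G_def [abs_def] g_def diff_divide_distrib has_real_derivative_iff_has_vector_derivative
          del: of_nat_Suc)
  qed
  ultimately have "(g has_integral G 1 - G 0) {0..1}"
    by (intro fundamental_theorem_of_calculus_interior) auto
  then have "(g has_integral 0) {0..1}" by (simp add: G_def)
  from has_integral_add[OF this has_integral_mult_right[OF Suc.IH, of "real (Suc j) / real (Suc m)"]]
  have "((\<lambda>x. x ^ m * (- ln x) ^ Suc j) has_integral
      real (Suc j) / real (Suc m) * (fact j / (real m + 1) ^ (j + 1))) {0..1}"
    using Suc.prems by (simp add: g_def)
  then show ?case
    by (rule has_integral_eq_rhs) (simp add: field_simps)
qed

lemma continuous_on_mult_ln: "continuous_on {0..b} (\<lambda>x::real. x * ln x)"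
proof (rule continuous_on_Icc_at_rightI)
  have "((\<lambda>x::real. x * ln x) \<longlongrightarrow> 0) (at_right 0)" by real_asymp
  then show "((\<lambda>x::real. x * ln x) \<longlongrightarrow> 0 * ln 0) (at_right 0)" by simp
qed (auto intro!: continuous_intros)

lemma minus_mult_ln_bounds:
  fixes x :: real
  assumes "0 \<le> x" "x \<le> 1"
  shows "0 \<le> - x * ln x" "- x * ln x \<le> 1"
proof -
  show "0 \<le> - x * ln x"
    using assms by (cases "x = 0") (auto simp: mult_nonneg_nonpos)
  show "- x * ln x \<le> 1"
  proof (cases "x = 0")
    case False
    then have "x * (- ln x) \<le> x * (1 / x)"
      using assms minus_ln_le_inverse[of x] by (intro mult_left_mono) auto
    with False show ?thesis by simp
  qed simp
qed

lemma has_integral_minus_mult_ln_power: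
  "((\<lambda>x::real. (- x * ln x) ^ k) has_integral fact k / (real k + 1) ^ (k + 1)) {0..1}"
proof -
  have "(- x * ln x) ^ k = x ^ k * (- ln x) ^ k" for x :: real
    by (simp add: power_mult_distrib [symmetric])
  then show ?thesis using has_integral_power_mult_minus_ln_power[of k k] by simp
qed

text \<open>The power series of \<open>exp (t * (- x * ln x))\<close> converges uniformly on \<open>{0..1}\<close> because
  \<open>0 \<le> - x * ln x \<le> 1\<close> there.\<close>
lemma sophomores_dream:
  fixes t :: real
  shows "(\<lambda>x. exp (- t * x * ln x)) integrable_on {0..1}"
    and "(\<lambda>n. t ^ n / (real n + 1) ^ (n + 1)) sums integral {0..1} (\<lambda>x. exp (- t * x * ln x))"
proof -
  define \<phi> where "\<phi> x = - x * ln x" for x :: real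
  define f where "f n x = (t * \<phi> x) ^ n / fact n" for n :: nat and x :: real
  have "uniform_limit {0..1} (\<lambda>n x. \<Sum>i<n. f i x) (\<lambda>x. \<Sum>i. f i x) sequentially"
  proof (rule Weierstrass_m_test)
    show "norm (f n x) \<le> \<bar>t\<bar> ^ n / fact n" if "x \<in> {0..1}" for n x
    proof -
      have "\<bar>t * \<phi> x\<bar> \<le> \<bar>t\<bar>"
        using minus_mult_ln_bounds[of x] that by (simp add: \<phi>_def abs_mult mult_left_le)
      then show ?thesis
        by (simp add: f_def power_abs divide_right_mono power_mono)
    qed
    show "summable (\<lambda>n. \<bar>t\<bar> ^ n / fact n)"
      using summable_exp[of "\<bar>t\<bar>"] by (simp add: field_simps)
  qed
  moreover have "continuous_on {0..1} \<phi>"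
    using continuous_on_minus[OF continuous_on_mult_ln[of 1]] by (simp add: \<phi>_def [abs_def])
  then have "continuous_on {0..1} (\<lambda>x. \<Sum>i<n. f i x)" for n
    unfolding f_def by (intro continuous_intros) auto
  ultimately obtain I J where I: "\<And>n. ((\<lambda>x. \<Sum>i<n. f i x) has_integral I n) {0..1}"
    and J: "((\<lambda>x. \<Sum>i. f i x) has_integral J) {0..1}" and IJ: "I \<longlonglongrightarrow> J"
    by (rule uniform_limit_integral) auto
  have "f i = (\<lambda>x. t ^ i / fact i * (- x * ln x) ^ i)" for i
    unfolding f_def \<phi>_def power_mult_distrib by (simp add: field_simps)
  then have "(f i has_integral t ^ i / (real i + 1) ^ (i + 1)) {0..1}" for i
    using has_integral_mult_right[OF has_integral_minus_mult_ln_power[of i], of "t ^ i / fact i"] by simp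
  then have "((\<lambda>x. \<Sum>i<n. f i x) has_integral (\<Sum>i<n. t ^ i / (real i + 1) ^ (i + 1))) {0..1}" for n
    by (intro has_integral_sum) auto
  then have "I = (\<lambda>n. \<Sum>i<n. t ^ i / (real i + 1) ^ (i + 1))"
    using I has_integral_unique by (intro ext) blast
  with IJ have sums: "(\<lambda>n. t ^ n / (real n + 1) ^ (n + 1)) sums J"
    by (simp add: sums_def)
  have "(\<Sum>i. f i x) = exp (- t * x * ln x)" for x
    using exp_converges[of "t * \<phi> x"] by (simp add: f_def \<phi>_def sums_iff field_simps)
  with J have "((\<lambda>x. exp (- t * x * ln x)) has_integral J) {0..1}" by simp
  with sums show "(\<lambda>x. exp (- t * x * ln x)) integrable_on {0..1}"
    and "(\<lambda>n. t ^ n / (real n + 1) ^ (n + 1)) sums integral {0..1} (\<lambda>x. exp (- t * x * ln x))"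
    by (auto simp: integral_unique)
qed

lemma sd_f_eq_integral:
  "sd_f t = t * integral {0..1} (\<lambda>x. exp (- t * x * ln x))"
proof -
  from sums_mult[OF sophomores_dream(2), of t]
  have "(\<lambda>n. t ^ Suc n / real (Suc n) ^ Suc n) sums (t * integral {0..1} (\<lambda>x. exp (- t * x * ln x)))"
    by (simp add: add.commute)
  then show ?thesis by (simp add: sd_f_def sums_iff)
qed

section \<open>The phase function of Laplace's method\<close>

definition bennett_h :: "real \<Rightarrow> real" where
  "bennett_h y = (1 + y) * ln (1 + y) - y"

lemma exp_minus_mult_ln_rescaled:
  assumes "-1 \<le> y"
  shows "exp (- (exp 1 * L) * ((1 + y) / exp 1) * ln ((1 + y) / exp 1)) = exp L * exp (- L * bennett_h y)"
proof (cases "y = -1")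
  case False
  with assms have ln_eq: "ln ((1 + y) / exp 1) = ln (1 + y) - 1" by (simp add: ln_div)
  have "- (exp 1 * L) * ((1 + y) / exp 1) * ln ((1 + y) / exp 1) = L + - L * bennett_h y"
    unfolding ln_eq bennett_h_def by (simp add: field_simps)
  then show ?thesis by (simp only: exp_add)
qed (simp add: bennett_h_def exp_add [symmetric])

text \<open>The substitution \<open>x = (1 + y) / e\<close> centres the maximum of \<open>- x * ln x\<close> at \<open>y = 0\<close>.\<close>
lemma sd_f_eq_laplace_integral:
  "sd_f (exp 1 * L) = L * exp L * integral {-1..exp 1 - 1} (\<lambda>y. exp (- L * bennett_h y))"
proof -
  let ?f = "\<lambda>x. exp (- (exp 1 * L) * x * ln x)"
  define i where "i = integral {0..1} ?f"
  have "(?f has_integral i) (cbox 0 1)"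
    using sophomores_dream(1)[of "exp 1 * L"] by (simp add: i_def has_integral_integral)
  from has_integral_affinity'[OF this, of "1 / exp 1" "1 / exp 1"]
  have "((\<lambda>y. ?f ((1 / exp 1) *\<^sub>R y + 1 / exp 1)) has_integral i * exp 1)
      (cbox ((0 - 1 / exp 1) /\<^sub>R (1 / exp 1)) ((1 - 1 / exp 1) /\<^sub>R (1 / exp 1)))"
    by (simp add: mult.commute)
  moreover have "cbox ((0 - 1 / exp 1) /\<^sub>R (1 / exp 1)) ((1 - 1 / exp 1) /\<^sub>R (1 / exp 1)) = {-1..exp 1 - 1::real}"
    by (simp add: cbox_interval field_simps)
  moreover have "(1 / exp 1) *\<^sub>R y + 1 / exp 1 = (1 + y) / exp 1" for y :: real
    by (simp add: add_divide_distrib)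
  ultimately have "((\<lambda>y. ?f ((1 + y) / exp 1)) has_integral i * exp 1) {-1..exp 1 - 1}"
    by simp
  then have "((\<lambda>y. exp L * exp (- L * bennett_h y)) has_integral i * exp 1) {-1..exp 1 - 1}"
  proof (rule has_integral_eq [rotated])
    show "?f ((1 + y) / exp 1) = exp L * exp (- L * bennett_h y)" if "y \<in> {-1..exp 1 - 1}" for y
      using that by (intro exp_minus_mult_ln_rescaled) simp
  qed
  from has_integral_mult_right[OF this, of "exp (- L)"]
  have "integral {-1..exp 1 - 1} (\<lambda>y. exp (- L * bennett_h y)) = exp (- L) * (i * exp 1)"
    by (simp add: mult.assoc [symmetric] exp_add [symmetric] integral_unique)
  then show ?thesis
    by (simp add: sd_f_eq_integral i_def exp_minus field_simps)
qed

lemma continuous_on_bennett_h: "continuous_on {-1..b} bennett_h"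
proof -
  have "continuous_on {-1..b} (\<lambda>y. (1 + y) * ln (1 + y))"
    by (rule continuous_on_compose2[OF continuous_on_mult_ln[of "1 + b"]]) (auto intro!: continuous_intros)
  from continuous_on_diff[OF this continuous_on_id] show ?thesis
    by (simp add: bennett_h_def [abs_def])
qed

lemma bennett_h_has_real_derivative:
  "-1 < y \<Longrightarrow> (bennett_h has_real_derivative ln (1 + y)) (at y)"
  unfolding bennett_h_def [abs_def] by (auto intro!: derivative_eq_intros simp: field_simps)

lemma bennett_h_taylor:
  assumes "\<bar>y\<bar> \<le> 1/2"
  shows "\<bar>bennett_h y - (y^2/2 - y^3/6 + y^4/12 - y^5/20)\<bar> \<le> 2 * y^6"
proof -
  define d :: "nat \<Rightarrow> real \<Rightarrow> real" where
    "d m t = (case m of 0 \<Rightarrow> bennett_h t | Suc 0 \<Rightarrow> ln (1 + t)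
      | Suc (Suc k) \<Rightarrow> (-1) ^ k * fact k * power_int (1 + t) (- int (Suc k)))" for m t
  have "(d m has_real_derivative d (Suc m) t) (at t)" if "\<bar>t\<bar> \<le> \<bar>y\<bar>" for m t
  proof -
    from that assms have "0 < 1 + t" by linarith
    consider "m = 0" | "m = 1" | k where "m = Suc (Suc k)"
      by (metis One_nat_def not0_implies_Suc)
    then show ?thesis
    proof cases
      case 3
      have "((\<lambda>t. (-1) ^ k * fact k * power_int (1 + t) (- int (Suc k))) has_real_derivative
          (-1) ^ Suc k * fact (Suc k) * power_int (1 + t) (- int (Suc (Suc k)))) (at t)"
        using \<open>0 < 1 + t\<close> by (auto intro!: derivative_eq_intros simp: algebra_simps)
      then show ?thesis by (simp add: 3 d_def [abs_def])
    qed (use \<open>0 < 1 + t\<close> in \<open>auto simp: d_def [abs_def] bennett_h_has_real_derivative inverse_eq_divide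
        intro!: derivative_eq_intros\<close>)
  qed
  then obtain t where t: "\<bar>t\<bar> \<le> \<bar>y\<bar>"
    and taylor: "bennett_h y = (\<Sum>m<6. d m 0 / fact m * y ^ m) + d 6 t / fact 6 * y ^ 6"
    using Maclaurin_bi_le[of d bennett_h 6 y] by (auto simp: d_def [abs_def])
  have "(\<Sum>m<6. d m 0 / fact m * y ^ m) = y^2/2 - y^3/6 + y^4/12 - y^5/20"
    by (simp add: d_def eval_nat_numeral bennett_h_def)
  moreover have "0 \<le> d 6 t" "d 6 t / fact 6 \<le> 2"
  proof -
    from t assms have "1/2 \<le> 1 + t" by linarith
    then have "(1/2) ^ 5 \<le> (1 + t) ^ 5" by (intro power_mono) auto
    with \<open>1/2 \<le> 1 + t\<close> show "0 \<le> d 6 t" "d 6 t / fact 6 \<le> 2"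
      by (auto simp: d_def eval_nat_numeral power_int_minus field_simps)
  qed
  ultimately have "\<bar>bennett_h y - (y^2/2 - y^3/6 + y^4/12 - y^5/20)\<bar> = d 6 t / fact 6 * y ^ 6"
    using taylor by (simp add: abs_mult)
  also have "\<dots> \<le> 2 * y ^ 6"
    using \<open>d 6 t / fact 6 \<le> 2\<close> by (intro mult_right_mono) auto
  finally show ?thesis .
qed

lemma bennett_h_ge:
  assumes "-1 \<le> y" "1/2 \<le> \<bar>y\<bar>"
  shows "1/16 \<le> bennett_h y"
proof -
  have "1/16 \<le> bennett_h (1/2)" "1/16 \<le> bennett_h (-1/2)"
    using abs_le_D2[OF bennett_h_taylor[of "1/2"]] abs_le_D2[OF bennett_h_taylor[of "-1/2"]]
    by (auto simp: power_divide)
  consider "y = -1" | "-1 < y" "y \<le> -1/2" | "1/2 \<le> y"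
    using assms by linarith
  then show ?thesis
  proof cases
    case 1
    then show ?thesis by (simp add: bennett_h_def)
  next
    case 2
    have "bennett_h (-1/2) \<le> bennett_h y"
      using 2 by (intro DERIV_nonpos_imp_nonincreasing[OF \<open>y \<le> -1/2\<close>])
        (auto intro!: exI bennett_h_has_real_derivative)
    with \<open>1/16 \<le> bennett_h (-1/2)\<close> show ?thesis by simp
  next
    case 3
    have "bennett_h (1/2) \<le> bennett_h y"
      using 3 by (intro DERIV_nonneg_imp_nondecreasing[OF \<open>1/2 \<le> y\<close>])
        (auto intro!: exI bennett_h_has_real_derivative)
    with \<open>1/16 \<le> bennett_h (1/2)\<close> show ?thesis by simp
  qed
qed

definition exp_taylor3 :: "real \<Rightarrow> real" where
  "exp_taylor3 z = 1 + z + z^2/2 + z^3/6"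

lemma exp_taylor3_error: "\<bar>exp z - exp_taylor3 z\<bar> \<le> exp \<bar>z\<bar> * z^4 / 24"
proof -
  obtain t where "\<bar>t\<bar> \<le> \<bar>z\<bar>" and "exp z = (\<Sum>m<4. z ^ m / fact m) + exp t / fact 4 * z ^ 4"
    using Maclaurin_exp_le[of z 4] by blast
  then have "\<bar>exp z - exp_taylor3 z\<bar> = exp t * z^4 / 24"
    by (simp add: exp_taylor3_def eval_nat_numeral abs_mult)
  also have "\<dots> \<le> exp \<bar>z\<bar> * z^4 / 24"
    using \<open>\<bar>t\<bar> \<le> \<bar>z\<bar>\<close> by (intro divide_right_mono mult_right_mono) auto
  finally show ?thesis .
qed

lemma exp_taylor3_diff:
  assumes "\<bar>z\<bar> \<le> c" "\<bar>w\<bar> \<le> c"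
  shows "\<bar>exp_taylor3 z - exp_taylor3 w\<bar> \<le> (1 + c + c^2/2) * \<bar>z - w\<bar>"
proof -
  have "\<bar>z\<bar> * \<bar>z\<bar> \<le> c * c" "\<bar>z\<bar> * \<bar>w\<bar> \<le> c * c" "\<bar>w\<bar> * \<bar>w\<bar> \<le> c * c"
    using mult_mono'[OF assms(1) assms(1)] mult_mono'[OF assms(1) assms(2)] mult_mono'[OF assms(2) assms(2)]
    by simp_all
  moreover have "\<bar>z^2 + z*w + w^2\<bar> \<le> \<bar>z\<bar> * \<bar>z\<bar> + \<bar>z\<bar> * \<bar>w\<bar> + \<bar>w\<bar> * \<bar>w\<bar>"
    using abs_triangle_ineq[of "z^2 + z*w" "w^2"] abs_triangle_ineq[of "z^2" "z*w"]
    by (simp add: abs_mult power2_eq_square)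
  ultimately have "\<bar>z^2 + z*w + w^2\<bar> \<le> 3 * c^2"
    by (simp add: power2_eq_square)
  moreover have "exp_taylor3 z - exp_taylor3 w = (1 + (z + w)/2 + (z^2 + z*w + w^2)/6) * (z - w)"
    by (simp add: exp_taylor3_def power2_eq_square power3_eq_cube algebra_simps add_divide_distrib diff_divide_distrib)
  moreover have "\<bar>1 + (z + w)/2 + (z^2 + z*w + w^2)/6\<bar> \<le> 1 + c + c^2/2"
    using \<open>\<bar>z^2 + z*w + w^2\<bar> \<le> 3 * c^2\<close> assms
    by (auto simp: abs_le_iff field_simps)
  ultimately show ?thesis
    by (simp add: abs_mult mult_right_mono)
qed

lemma exp_taylor3_add:
  "\<bar>exp_taylor3 (u + v) - (exp_taylor3 u + v + u * v)\<bar> \<le> \<bar>v\<bar> * (\<bar>v\<bar> + (\<bar>u\<bar> + \<bar>v\<bar>)^2) / 2"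
proof -
  define s where "s = \<bar>u\<bar> + \<bar>v\<bar>"
  have "\<bar>u + v\<bar> \<le> s" "\<bar>u\<bar> \<le> s" by (auto simp: s_def)
  then have "\<bar>u + v\<bar> * \<bar>u + v\<bar> \<le> s * s" "\<bar>u + v\<bar> * \<bar>u\<bar> \<le> s * s" "\<bar>u\<bar> * \<bar>u\<bar> \<le> s * s"
    by (simp_all only: mult_mono' abs_ge_zero)
  moreover have "\<bar>(u + v)^2 + (u + v) * u + u^2\<bar> \<le> \<bar>u + v\<bar> * \<bar>u + v\<bar> + \<bar>u + v\<bar> * \<bar>u\<bar> + \<bar>u\<bar> * \<bar>u\<bar>"
    using abs_triangle_ineq[of "(u + v)^2 + (u + v) * u" "u^2"] abs_triangle_ineq[of "(u + v)^2" "(u + v) * u"]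
    by (simp add: abs_mult power2_eq_square)
  ultimately have "\<bar>(u + v)^2 + (u + v) * u + u^2\<bar> \<le> 3 * s^2"
    by (simp add: power2_eq_square)
  have "exp_taylor3 (u + v) - (exp_taylor3 u + v + u * v) = v^2 / 2 + v * ((u + v)^2 + (u + v) * u + u^2) / 6"
    by (simp add: exp_taylor3_def power2_eq_square power3_eq_cube field_simps)
  also have "\<bar>\<dots>\<bar> \<le> \<bar>v\<bar> * \<bar>v\<bar> / 2 + \<bar>v\<bar> * (3 * s^2) / 6"
  proof -
    have "\<bar>v^2 / 2\<bar> = \<bar>v\<bar> * \<bar>v\<bar> / 2"
      and "\<bar>v * ((u + v)^2 + (u + v) * u + u^2) / 6\<bar> = \<bar>v\<bar> * \<bar>(u + v)^2 + (u + v) * u + u^2\<bar> / 6"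
      by (simp_all add: abs_mult power2_eq_square)
    then show ?thesis
      using abs_triangle_ineq[of "v^2 / 2" "v * ((u + v)^2 + (u + v) * u + u^2) / 6"]
        mult_left_mono[OF \<open>\<bar>(u + v)^2 + (u + v) * u + u^2\<bar> \<le> 3 * s^2\<close> abs_ge_zero[of v]]
      by linarith
  qed
  also have "\<dots> = \<bar>v\<bar> * (\<bar>v\<bar> + s^2) / 2"
    by (simp add: field_simps)
  finally show ?thesis by (simp add: s_def)
qed

lemma exp_taylor3_perturbation_bound:
  assumes "\<bar>z\<bar> \<le> c" "\<bar>u\<bar> + \<bar>v\<bar> \<le> c"
  shows "\<bar>exp z - (exp_taylor3 u + v + u * v - u * w)\<bar>
    \<le> exp c * c^4 / 24 + (1 + c + c^2/2) * \<bar>z - (u + v)\<bar> + \<bar>v\<bar> * (\<bar>v\<bar> + c^2) / 2 + \<bar>u * w\<bar>"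
proof -
  have "\<bar>u + v\<bar> \<le> c"
    using abs_triangle_ineq[of u v] assms(2) by linarith
  have "exp \<bar>z\<bar> * z^4 \<le> exp c * c^4"
    using assms(1) power_mono[OF assms(1) abs_ge_zero, of 4] by (intro mult_mono) (auto simp: power_even_abs)
  with exp_taylor3_error[of z] have "\<bar>exp z - exp_taylor3 z\<bar> \<le> exp c * c^4 / 24"
    by simp
  moreover have "\<bar>exp_taylor3 z - exp_taylor3 (u + v)\<bar> \<le> (1 + c + c^2/2) * \<bar>z - (u + v)\<bar>"
    using exp_taylor3_diff[OF assms(1) \<open>\<bar>u + v\<bar> \<le> c\<close>] .
  moreover have "\<bar>v\<bar> * (\<bar>v\<bar> + (\<bar>u\<bar> + \<bar>v\<bar>)^2) / 2 \<le> \<bar>v\<bar> * (\<bar>v\<bar> + c^2) / 2"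
    using assms(2) by (intro divide_right_mono mult_left_mono add_left_mono power_mono) auto
  with exp_taylor3_add[of u v]
  have "\<bar>exp_taylor3 (u + v) - (exp_taylor3 u + v + u * v)\<bar> \<le> \<bar>v\<bar> * (\<bar>v\<bar> + c^2) / 2"
    by linarith
  ultimately show ?thesis
    by linarith
qed

lemma exp_taylor3_perturbation:
  fixes L Y z u v w :: real
  assumes "0 \<le> L" "0 \<le> Y" "Y \<le> 1/2"
    and u: "\<bar>u\<bar> \<le> L * Y^3 / 6" and v: "\<bar>v\<bar> \<le> L * Y^4 / 8" and w: "\<bar>w\<bar> \<le> L * Y^5 / 20"
    and z: "\<bar>z - (u + v)\<bar> \<le> 2 * L * Y^6"
  shows "\<bar>exp z - (exp_taylor3 u + v + u * v - u * w)\<bar>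
    \<le> 2 * exp (L * Y^2 / 4) * (L * Y^6 + L^2 * Y^8 + L^3 * Y^10 + L^4 * Y^12)"
proof -
  define c where "c = L * Y^3 / 2"
  have half: "Y ^ Suc n \<le> Y ^ n / 2" for n
    using mult_left_mono[OF \<open>Y \<le> 1/2\<close>, of "Y ^ n"] \<open>0 \<le> Y\<close> by (simp add: mult.commute)
  note half = half[of 2] half[of 3] half[of 4] half[of 5] half[of 8] half[of 10] half[of 11]
  have Y: "Y^4 \<le> Y^3 / 2" "Y^6 \<le> Y^3 / 8" "Y^3 \<le> Y^2 / 2" "Y^9 \<le> Y^8" "Y^12 \<le> Y^10"
    using half power_decreasing[of 8 9 Y] power_decreasing[of 10 12 Y] assms(2,3) by simp_all
  have "\<bar>u\<bar> + \<bar>v\<bar> \<le> c / 2"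
    using u v mult_left_mono[OF Y(1) assms(1)] by (simp add: c_def)
  moreover have "2 * L * Y^6 \<le> c / 2"
    using mult_left_mono[OF Y(2) assms(1)] by (simp add: c_def)
  ultimately have "\<bar>u\<bar> + \<bar>v\<bar> \<le> c" "\<bar>z\<bar> \<le> c"
    using z abs_triangle_ineq[of "z - (u + v)" "u + v"] abs_triangle_ineq[of u v] by linarith+
  have "0 \<le> c" "c \<le> L * Y^2 / 4"
    using mult_left_mono[OF Y(3) assms(1)] \<open>\<bar>z\<bar> \<le> c\<close> by (simp_all add: c_def)
  have E1: "exp c * c^4 / 24 \<le> exp (L * Y^2 / 4) * (L^4 * Y^12)"
  proof -
    have "c^4 = L^4 * Y^12 / 16"
      unfolding c_def by (simp add: field_simps; algebra)
    moreover have "0 \<le> L^4 * Y^12"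
      using \<open>0 \<le> L\<close> \<open>0 \<le> Y\<close> by simp
    ultimately have "c^4 / 24 \<le> L^4 * Y^12"
      by linarith
    moreover have "exp c \<le> exp (L * Y^2 / 4)"
      using \<open>c \<le> L * Y^2 / 4\<close> by simp
    ultimately have "exp c * (c^4 / 24) \<le> exp (L * Y^2 / 4) * (L^4 * Y^12)"
      using \<open>0 \<le> c\<close> by (intro mult_mono) auto
    then show ?thesis by simp
  qed
  have E2: "(1 + c + c^2/2) * \<bar>z - (u + v)\<bar> \<le> 2 * (L * Y^6) + L^2 * Y^8 + L^3 * Y^10"
  proof -
    have "(1 + c + c^2/2) * \<bar>z - (u + v)\<bar> \<le> (1 + c + c^2/2) * (2 * L * Y^6)"
      using z \<open>0 \<le> c\<close> by (intro mult_left_mono) auto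
    also have "\<dots> = 2 * (L * Y^6) + L^2 * Y^9 + L^3 * Y^12 / 4"
      unfolding c_def by (simp add: field_simps; algebra)
    also have "\<dots> \<le> 2 * (L * Y^6) + L^2 * Y^8 + L^3 * Y^10"
    proof -
      have "0 \<le> L^3 * Y^12" using \<open>0 \<le> L\<close> \<open>0 \<le> Y\<close> by simp
      then show ?thesis
        using mult_left_mono[OF Y(4) zero_le_power2[of L]] mult_left_mono[OF Y(5) zero_le_power[OF \<open>0 \<le> L\<close>, of 3]]
        by linarith
    qed
    finally show ?thesis .
  qed
  have E3: "\<bar>v\<bar> * (\<bar>v\<bar> + c^2) / 2 \<le> L^2 * Y^8 / 128 + L^3 * Y^10 / 64"
  proof -
    have "\<bar>v\<bar> * (\<bar>v\<bar> + c^2) / 2 \<le> (L * Y^4 / 8) * (L * Y^4 / 8 + c^2) / 2"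
      using v by (intro divide_right_mono mult_mono add_right_mono) auto
    also have "\<dots> = L^2 * Y^8 / 128 + L^3 * Y^10 / 64"
      unfolding c_def by (simp add: field_simps; algebra)
    finally show ?thesis .
  qed
  have E4: "\<bar>u * w\<bar> \<le> L^2 * Y^8 / 120"
  proof -
    have "\<bar>u * w\<bar> \<le> (L * Y^3 / 6) * (L * Y^5 / 20)"
      unfolding abs_mult using u w by (intro mult_mono) auto
    also have "\<dots> = L^2 * Y^8 / 120"
      by (simp add: field_simps; algebra)
    finally show ?thesis .
  qed
  define S where "S = L * Y^6 + L^2 * Y^8 + L^3 * Y^10"
  have "0 \<le> S" "0 \<le> L^4 * Y^12"
    using \<open>0 \<le> L\<close> \<open>0 \<le> Y\<close> by (simp_all add: S_def)
  moreover have "1 \<le> exp (L * Y^2 / 4)"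
    using \<open>0 \<le> L\<close> by simp
  ultimately have "S \<le> exp (L * Y^2 / 4) * S" "0 \<le> exp (L * Y^2 / 4) * (L^4 * Y^12)"
    by (simp_all add: mult_le_cancel_right1)
  moreover have "0 \<le> L^2 * Y^8" "0 \<le> L^3 * Y^10"
    using \<open>0 \<le> L\<close> \<open>0 \<le> Y\<close> by simp_all
  ultimately have "\<bar>exp z - (exp_taylor3 u + v + u * v - u * w)\<bar>
      \<le> 2 * (exp (L * Y^2 / 4) * S) + 2 * (exp (L * Y^2 / 4) * (L^4 * Y^12))"
    using exp_taylor3_perturbation_bound[OF \<open>\<bar>z\<bar> \<le> c\<close> \<open>\<bar>u\<bar> + \<bar>v\<bar> \<le> c\<close>, of w] E1 E2 E3 E4 S_def
    by linarith
  then show ?thesis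
    by (simp add: S_def algebra_simps)
qed

text \<open>The sum of the two polynomials below is \<open>exp_taylor3 u + v + u * v - u * w\<close> with \<open>u = L y^3/6\<close>,
  \<open>v = L (y^5/20 - y^4/12)\<close> and \<open>w = L y^5/20\<close>: the terms of the cubic Taylor polynomial of
  \<open>exp (L (y^2/2 - bennett_h y)) \<approx> exp (u + v)\<close> that matter up to relative order \<open>1/L\<close>.\<close>

definition laplace_even :: "real \<Rightarrow> real \<Rightarrow> real" where
  "laplace_even L y = 1 - L * y^4 / 12 + L^2 * y^6 / 72"

definition laplace_odd :: "real \<Rightarrow> real \<Rightarrow> real" where
  "laplace_odd L y = L * y^3 / 6 + L * y^5 / 20 - L^2 * y^7 / 72 + L^3 * y^9 / 1296"

text \<open>Each monomial \<open>L^k y^(2k+4)\<close> of the error bound integrates against \<open>exp (- L y^2 / 4)\<close> to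
  \<open>O(L^(-5/2))\<close>.\<close>
lemma exp_minus_bennett_h_approx:
  assumes "0 \<le> L" "\<bar>y\<bar> \<le> 1/2"
  shows "\<bar>exp (- L * bennett_h y) - exp (- L * y^2 / 2) * (laplace_even L y + laplace_odd L y)\<bar>
    \<le> 2 * exp (- L * y^2 / 4) * (L * y^6 + L^2 * y^8 + L^3 * y^10 + L^4 * y^12)"
proof -
  define u where "u = L * y^3 / 6"
  define v where "v = L * (y^5 / 20 - y^4 / 12)"
  define w where "w = L * y^5 / 20"
  define z where "z = - L * (bennett_h y - y^2 / 2)"
  have expansion: "laplace_even L y + laplace_odd L y = exp_taylor3 u + v + u * v - u * w"
    unfolding laplace_even_def laplace_odd_def exp_taylor3_def u_def v_def w_def
    by (simp add: field_simps; algebra)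
  have bound: "\<bar>exp z - (exp_taylor3 u + v + u * v - u * w)\<bar>
      \<le> 2 * exp (L * \<bar>y\<bar>^2 / 4) * (L * \<bar>y\<bar>^6 + L^2 * \<bar>y\<bar>^8 + L^3 * \<bar>y\<bar>^10 + L^4 * \<bar>y\<bar>^12)"
  proof (rule exp_taylor3_perturbation)
    show "\<bar>u\<bar> \<le> L * \<bar>y\<bar>^3 / 6" "\<bar>w\<bar> \<le> L * \<bar>y\<bar>^5 / 20"
      using assms by (simp_all add: u_def w_def abs_mult power_abs)
    have "y^5 / 20 - y^4 / 12 = y^4 * (y / 20 - 1 / 12)"
      by (simp add: field_simps; algebra)
    then have "\<bar>y^5 / 20 - y^4 / 12\<bar> = \<bar>y\<bar>^4 * \<bar>y / 20 - 1 / 12\<bar>"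
      by (simp add: abs_mult power_abs)
    also have "\<dots> \<le> \<bar>y\<bar>^4 * (\<bar>y\<bar> / 20 + 1 / 12)"
      using abs_triangle_ineq4[of "y / 20" "1 / 12"] by (intro mult_left_mono) simp_all
    also have "\<dots> \<le> \<bar>y\<bar>^4 * (1 / 8)"
      using assms by (intro mult_left_mono) simp_all
    finally have "\<bar>y^5 / 20 - y^4 / 12\<bar> \<le> \<bar>y\<bar>^4 / 8" by simp
    from mult_left_mono[OF this assms(1)] show "\<bar>v\<bar> \<le> L * \<bar>y\<bar>^4 / 8"
      using assms(1) by (simp add: v_def abs_mult)
    have "z - (u + v) = - L * (bennett_h y - (y^2/2 - y^3/6 + y^4/12 - y^5/20))"
      by (simp add: z_def u_def v_def algebra_simps)
    then show "\<bar>z - (u + v)\<bar> \<le> 2 * L * \<bar>y\<bar>^6"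
      using mult_left_mono[OF bennett_h_taylor[OF assms(2)] assms(1)] assms(1)
      by (simp add: abs_mult power_even_abs)
  qed (use assms in auto)
  have "exp (- L * bennett_h y) = exp (- L * y^2 / 2) * exp z"
    by (simp add: z_def exp_add [symmetric] algebra_simps)
  then have "\<bar>exp (- L * bennett_h y) - exp (- L * y^2 / 2) * (laplace_even L y + laplace_odd L y)\<bar>
      = exp (- L * y^2 / 2) * \<bar>exp z - (exp_taylor3 u + v + u * v - u * w)\<bar>"
    by (simp add: expansion abs_mult right_diff_distrib [symmetric])
  also have "\<dots> \<le> exp (- L * y^2 / 2) *
      (2 * exp (L * y^2 / 4) * (L * y^6 + L^2 * y^8 + L^3 * y^10 + L^4 * y^12))"
    using bound by (intro mult_left_mono) (simp_all add: power_even_abs)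
  also have "\<dots> = 2 * exp (- L * y^2 / 4) * (L * y^6 + L^2 * y^8 + L^3 * y^10 + L^4 * y^12)"
    by (simp add: mult.left_commute exp_add [symmetric])
  finally show ?thesis .
qed

section \<open>Gaussian integrals and Laplace's method\<close>

lemma has_integral_gaussian_moment:
  fixes s :: real
  assumes "0 < s"
  shows "((\<lambda>y. exp (- s * y^2 / 2) * y^(2*k)) has_integral sqrt (2 * pi / s) * fact (2*k) / ((2 * s)^k * fact k)) UNIV"
proof -
  define \<sigma> where "\<sigma> = 1 / sqrt s"
  have "0 < \<sigma>" "\<sigma>^2 = 1 / s"
    using assms by (simp_all add: \<sigma>_def power_divide)
  note moment = normal_moment_even[OF \<open>0 < \<sigma>\<close>, of 0 k]
  have "((\<lambda>y. normal_density 0 \<sigma> y * (y - 0) ^ (2*k)) has_integral fact (2*k) / ((2 / \<sigma>^2)^k * fact k)) UNIV"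
    using has_integral_integral_lborel[OF integrable.intros[OF moment]] has_bochner_integral_integral_eq[OF moment]
    by simp
  from has_integral_mult_right[OF this, of "sqrt (2 * pi / s)"] show ?thesis
    using assms \<open>\<sigma>^2 = 1 / s\<close>
    by (simp add: normal_density_def real_sqrt_mult [symmetric] real_sqrt_divide mult.commute)
qed

lemma has_integral_gaussian_moment_quarter:
  fixes L :: real
  assumes "0 < L"
  shows "((\<lambda>y. exp (- L * y^2 / 4) * y^(2*k)) has_integral sqrt (4 * pi / L) * fact (2*k) / (L^k * fact k)) UNIV"
  using has_integral_gaussian_moment[of "L / 2" k] assms by simp

text \<open>\<open>697320 = 6!/3! + 8!/4! + 10!/5! + 12!/6!\<close>.\<close>
lemma has_integral_laplace_remainder_majorant:
  fixes L :: real
  assumes "0 < L"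
  shows "((\<lambda>y. exp (- L * y^2 / 4) * (L * y^6 + L^2 * y^8 + L^3 * y^10 + L^4 * y^12)) has_integral
    697320 * sqrt (4 * pi / L) / L^2) UNIV"
proof -
  note moment = has_integral_gaussian_moment_quarter[OF assms]
  have "((\<lambda>y. L * (exp (- L * y^2 / 4) * y^(2*3)) + L^2 * (exp (- L * y^2 / 4) * y^(2*4))
      + L^3 * (exp (- L * y^2 / 4) * y^(2*5)) + L^4 * (exp (- L * y^2 / 4) * y^(2*6))) has_integral
      L * (sqrt (4 * pi / L) * fact (2*3) / (L^3 * fact 3)) + L^2 * (sqrt (4 * pi / L) * fact (2*4) / (L^4 * fact 4))
      + L^3 * (sqrt (4 * pi / L) * fact (2*5) / (L^5 * fact 5)) + L^4 * (sqrt (4 * pi / L) * fact (2*6) / (L^6 * fact 6))) UNIV"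
    by (intro has_integral_add has_integral_mult_right moment)
  then show ?thesis
    using assms by (simp add: fact_numeral field_simps eval_nat_numeral)
qed

lemma has_integral_gaussian_tail_majorant:
  fixes L :: real
  assumes "0 < L"
  shows "((\<lambda>y. exp (- L * y^2 / 4) * (1 + L * y^4 / 12 + L^2 * y^6 / 72)) has_integral
    sqrt (4 * pi / L) * (1 + 8 / (3 * L))) UNIV"
proof -
  note moment = has_integral_gaussian_moment_quarter[OF assms]
  have "((\<lambda>y. exp (- L * y^2 / 4) * y^(2*0) + L / 12 * (exp (- L * y^2 / 4) * y^(2*2))
      + L^2 / 72 * (exp (- L * y^2 / 4) * y^(2*3))) has_integral
      sqrt (4 * pi / L) * fact (2*0) / (L^0 * fact 0) + L / 12 * (sqrt (4 * pi / L) * fact (2*2) / (L^2 * fact 2))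
      + L^2 / 72 * (sqrt (4 * pi / L) * fact (2*3) / (L^3 * fact 3))) UNIV"
    by (intro has_integral_add has_integral_mult_right moment)
  moreover have "(\<lambda>y. exp (- L * y^2 / 4) * y^(2*0) + L / 12 * (exp (- L * y^2 / 4) * y^(2*2))
      + L^2 / 72 * (exp (- L * y^2 / 4) * y^(2*3)))
      = (\<lambda>y. exp (- L * y^2 / 4) * (1 + L * y^4 / 12 + L^2 * y^6 / 72))"
    by (simp add: algebra_simps)
  moreover have "sqrt (4 * pi / L) * fact (2*0) / (L^0 * fact 0) + L / 12 * (sqrt (4 * pi / L) * fact (2*2) / (L^2 * fact 2))
      + L^2 / 72 * (sqrt (4 * pi / L) * fact (2*3) / (L^3 * fact 3)) = sqrt (4 * pi / L) * (1 + 8 / (3 * L))"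
    using assms by (simp add: fact_numeral field_simps eval_nat_numeral)
  ultimately show ?thesis by simp
qed

lemma has_integral_gaussian_laplace_even:
  fixes L :: real
  assumes "0 < L"
  shows "((\<lambda>y. exp (- L * y^2 / 2) * laplace_even L y) has_integral sqrt (2 * pi / L) * (1 - 1 / (24 * L))) UNIV"
proof -
  note moment = has_integral_gaussian_moment[OF assms]
  have "((\<lambda>y. exp (- L * y^2 / 2) * y^(2*0) - L / 12 * (exp (- L * y^2 / 2) * y^(2*2))
      + L^2 / 72 * (exp (- L * y^2 / 2) * y^(2*3))) has_integral
      sqrt (2 * pi / L) * fact (2*0) / ((2 * L)^0 * fact 0) - L / 12 * (sqrt (2 * pi / L) * fact (2*2) / ((2 * L)^2 * fact 2))
      + L^2 / 72 * (sqrt (2 * pi / L) * fact (2*3) / ((2 * L)^3 * fact 3))) UNIV"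
    by (intro has_integral_add has_integral_diff has_integral_mult_right moment)
  moreover have "(\<lambda>y. exp (- L * y^2 / 2) * y^(2*0) - L / 12 * (exp (- L * y^2 / 2) * y^(2*2))
      + L^2 / 72 * (exp (- L * y^2 / 2) * y^(2*3))) = (\<lambda>y. exp (- L * y^2 / 2) * laplace_even L y)"
    by (simp add: laplace_even_def algebra_simps)
  moreover have "sqrt (2 * pi / L) * fact (2*0) / ((2 * L)^0 * fact 0) - L / 12 * (sqrt (2 * pi / L) * fact (2*2) / ((2 * L)^2 * fact 2))
      + L^2 / 72 * (sqrt (2 * pi / L) * fact (2*3) / ((2 * L)^3 * fact 3)) = sqrt (2 * pi / L) * (1 - 1 / (24 * L))"
    using assms by (simp add: fact_numeral field_simps eval_nat_numeral)
  ultimately show ?thesis by simp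
qed

lemma integral_symmetric_odd_eq_0:
  fixes f :: "real \<Rightarrow> real"
  assumes "\<And>x. f (- x) = - f x"
  shows "integral {-a..a} f = 0"
proof -
  have "integral {-a..a} f = integral {-a..a} (\<lambda>x. f (- x))"
    using Henstock_Kurzweil_Integration.integral_reflect_real[of a "-a" f] unfolding minus_minus by (rule sym)
  also have "\<dots> = - integral {-a..a} f"
    by (simp only: assms integral_neg)
  finally show ?thesis by simp
qed

lemma gaussian_laplace_even_tail_bound:
  fixes L :: real
  assumes "0 < L"
  defines "F \<equiv> \<lambda>y. exp (- L * y^2 / 2) * laplace_even L y"
  shows "\<bar>integral UNIV F - integral {-1/2..1/2} F\<bar> \<le> exp (- L / 16) * (sqrt (4 * pi / L) * (1 + 8 / (3 * L)))"
proof -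
  define T where "T y = exp (- L * y^2 / 4) * (1 + L * y^4 / 12 + L^2 * y^6 / 72)" for y
  have T: "((\<lambda>y. exp (- L / 16) * T y) has_integral exp (- L / 16) * (sqrt (4 * pi / L) * (1 + 8 / (3 * L)))) UNIV"
    unfolding T_def by (intro has_integral_mult_right has_integral_gaussian_tail_majorant assms)
  have "0 \<le> T y" for y
    using assms by (auto simp: T_def intro!: add_nonneg_nonneg)
  have "\<bar>F y\<bar> \<le> exp (- L / 16) * T y" if "y \<notin> {-1/2..1/2}" for y
  proof -
    have "1/2 \<le> \<bar>y\<bar>" using that by auto
    then have "(1/2)^2 \<le> \<bar>y\<bar>^2" by (intro power_mono) auto
    then have "1/4 \<le> y^2" by (simp add: power_divide)
    then have "L * (1/4) \<le> L * y^2"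
      using assms by (intro mult_left_mono) auto
    then have "- L * y^2 / 2 \<le> - L / 16 + - L * y^2 / 4" by simp
    then have "exp (- L * y^2 / 2) \<le> exp (- L / 16) * exp (- L * y^2 / 4)"
      by (simp only: exp_add [symmetric] exp_le_cancel_iff)
    moreover have "\<bar>laplace_even L y\<bar> \<le> 1 + L * y^4 / 12 + L^2 * y^6 / 72"
      using assms by (simp add: laplace_even_def abs_le_iff)
    ultimately have "exp (- L * y^2 / 2) * \<bar>laplace_even L y\<bar>
        \<le> (exp (- L / 16) * exp (- L * y^2 / 4)) * (1 + L * y^4 / 12 + L^2 * y^6 / 72)"
      by (intro mult_mono) auto
    then show ?thesis
      by (simp add: F_def T_def abs_mult mult.assoc)
  qed
  have F: "F integrable_on UNIV" "F integrable_on {-1/2..1/2}"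
    using has_integral_gaussian_laplace_even[OF assms(1)]
    by (auto simp: F_def [abs_def] laplace_even_def intro!: integrable_continuous_interval continuous_intros)
  define F\<^sub>I where "F\<^sub>I y = (if y \<in> {-1/2..1/2} then F y else 0)" for y :: real
  have "F\<^sub>I integrable_on UNIV"
    using F(2) by (simp only: F\<^sub>I_def [abs_def] integrable_restrict_UNIV)
  have "integral UNIV F - integral {-1/2..1/2} F = integral UNIV (\<lambda>y. F y - F\<^sub>I y)"
    using integral_diff[OF F(1) \<open>F\<^sub>I integrable_on UNIV\<close>] by (simp only: F\<^sub>I_def [abs_def] integral_restrict_UNIV)
  also have "\<bar>\<dots>\<bar> \<le> integral UNIV (\<lambda>y. exp (- L / 16) * T y)"
  proof (rule integral_norm_bound_integral [where f = "\<lambda>y. F y - F\<^sub>I y", unfolded real_norm_def])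
    show "(\<lambda>y. F y - F\<^sub>I y) integrable_on UNIV"
      using F(1) \<open>F\<^sub>I integrable_on UNIV\<close> by (rule integrable_diff)
    show "(\<lambda>y. exp (- L / 16) * T y) integrable_on UNIV"
      using T by blast
    show "\<bar>F y - F\<^sub>I y\<bar> \<le> exp (- L / 16) * T y" if "y \<in> UNIV" for y
      using \<open>0 \<le> T y\<close> \<open>y \<notin> {-1/2..1/2} \<Longrightarrow> \<bar>F y\<bar> \<le> exp (- L / 16) * T y\<close>
      by (cases "y \<in> {-1/2..1/2}") (auto simp: F\<^sub>I_def)
  qed
  also have "\<dots> = exp (- L / 16) * (sqrt (4 * pi / L) * (1 + 8 / (3 * L)))"
    using T by (rule integral_unique)
  finally show ?thesis .
qed

lemma laplace_central_bound:
  fixes L :: real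
  assumes "0 < L"
  shows "\<bar>integral {-1/2..1/2} (\<lambda>y. exp (- L * bennett_h y)) - sqrt (2 * pi / L) * (1 - 1 / (24 * L))\<bar>
    \<le> 1394640 * sqrt (4 * pi / L) / L^2 + exp (- L / 16) * (sqrt (4 * pi / L) * (1 + 8 / (3 * L)))"
proof -
  define I where "I = {-1/2..1/2::real}"
  define f where "f y = exp (- L * bennett_h y)" for y
  define F where "F y = exp (- L * y^2 / 2) * laplace_even L y" for y
  define G where "G y = exp (- L * y^2 / 2) * laplace_odd L y" for y
  define R where "R y = exp (- L * y^2 / 4) * (L * y^6 + L^2 * y^8 + L^3 * y^10 + L^4 * y^12)" for y
  have R: "((\<lambda>y. 2 * R y) has_integral 1394640 * sqrt (4 * pi / L) / L^2) UNIV"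
    unfolding R_def using has_integral_mult_right[OF has_integral_laplace_remainder_majorant[OF assms], of 2]
    by simp
  have "continuous_on I f"
    using continuous_on_subset[OF continuous_on_bennett_h[of "1/2"]]
    by (auto simp: I_def f_def [abs_def] intro!: continuous_intros)
  moreover have "continuous_on I F" "continuous_on I G" "continuous_on I R"
    by (auto simp: F_def [abs_def] G_def [abs_def] R_def [abs_def] laplace_even_def laplace_odd_def
        intro!: continuous_intros)
  ultimately have int: "f integrable_on I" "F integrable_on I" "G integrable_on I" "R integrable_on I"
    by (auto simp: I_def intro!: integrable_continuous_interval)
  have "G (- y) = - G y" for y
    by (simp add: G_def laplace_odd_def algebra_simps)
  then have "integral I G = 0"
    using integral_symmetric_odd_eq_0[of G "1/2"] by (simp add: I_def)
  then have split: "integral I f = integral I (\<lambda>y. f y - (F y + G y)) + integral I F"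
    using int by (simp add: integral_diff integral_add integrable_add)
  have "\<bar>integral I (\<lambda>y. f y - (F y + G y))\<bar> \<le> integral I (\<lambda>y. 2 * R y)"
  proof (rule integral_norm_bound_integral [where f = "\<lambda>y. f y - (F y + G y)", unfolded real_norm_def])
    show "(\<lambda>y. f y - (F y + G y)) integrable_on I" "(\<lambda>y. 2 * R y) integrable_on I"
      using int by (auto intro!: integrable_diff integrable_add integrable_cmul)
    show "\<bar>f y - (F y + G y)\<bar> \<le> 2 * R y" if "y \<in> I" for y
    proof -
      from that have "\<bar>y\<bar> \<le> 1/2" by (auto simp: I_def)
      with exp_minus_bennett_h_approx[of L y] assms show ?thesis
        by (simp add: f_def F_def G_def R_def distrib_left mult.assoc)
    qed
  qed
  also have "\<dots> \<le> integral UNIV (\<lambda>y. 2 * R y)"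
  proof (rule integral_subset_le)
    show "\<forall>y\<in>UNIV. 0 \<le> 2 * R y"
      using assms zero_le_even_power[of 6] zero_le_even_power[of 8] zero_le_even_power[of 10]
        zero_le_even_power[of 12] by (simp add: R_def)
  qed (use R int in \<open>auto intro: integrable_cmul\<close>)
  also have "\<dots> = 1394640 * sqrt (4 * pi / L) / L^2"
    using R by (rule integral_unique)
  finally have central: "\<bar>integral I (\<lambda>y. f y - (F y + G y))\<bar> \<le> 1394640 * sqrt (4 * pi / L) / L^2" .
  have "integral UNIV F = sqrt (2 * pi / L) * (1 - 1 / (24 * L))"
    using has_integral_gaussian_laplace_even[OF assms] by (simp add: F_def [abs_def] integral_unique)
  with split central gaussian_laplace_even_tail_bound[OF assms] show ?thesis
    unfolding I_def f_def [abs_def] F_def [abs_def] by linarith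
qed

lemma laplace_outer_bound:
  fixes L :: real
  assumes "-1 \<le> a" "a \<le> -1/2" "1/2 \<le> b" "0 \<le> L"
  shows "\<bar>integral {a..b} (\<lambda>y. exp (- L * bennett_h y)) - integral {-1/2..1/2} (\<lambda>y. exp (- L * bennett_h y))\<bar>
    \<le> (b - a - 1) * exp (- L / 16)"
proof -
  define f where "f y = exp (- L * bennett_h y)" for y
  have cont: "continuous_on {c..d} f" if "-1 \<le> c" for c d
    using continuous_on_subset[OF continuous_on_bennett_h[of d]] that
    by (auto simp: f_def [abs_def] intro!: continuous_intros)
  have small: "norm (f y) \<le> exp (- L / 16)" if "-1 \<le> y" "1/2 \<le> \<bar>y\<bar>" for y
    using mult_left_mono[OF bennett_h_ge[OF that] assms(4)] by (simp add: f_def)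
  have "integral {a..-1/2} f + integral {-1/2..b} f = integral {a..b} f"
    "integral {-1/2..1/2} f + integral {1/2..b} f = integral {-1/2..b} f"
    using assms cont by (auto intro!: Henstock_Kurzweil_Integration.integral_combine integrable_continuous_interval)
  moreover have "norm (integral {a..-1/2} f) \<le> exp (- L / 16) * (-1/2 - a)"
    using assms small by (intro integral_bound cont) auto
  moreover have "norm (integral {1/2..b} f) \<le> exp (- L / 16) * (b - 1/2)"
    using assms small by (intro integral_bound cont) auto
  ultimately show ?thesis
    by (simp add: f_def [abs_def] algebra_simps)
qed

lemma laplace_bennett_h_asymptotics:
  assumes "-1 \<le> a" "a \<le> -1/2" "1/2 \<le> b"
  shows "(\<lambda>L. integral {a..b} (\<lambda>y. exp (- L * bennett_h y)) - sqrt (2 * pi / L) * (1 - 1 / (24 * L)))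
    \<in> O(\<lambda>L. L powr (-5/2))"
proof -
  define B where "B L = (b - a - 1) * exp (- L / 16) + 1394640 * sqrt (4 * pi / L) / L^2
    + exp (- L / 16) * (sqrt (4 * pi / L) * (1 + 8 / (3 * L)))" for L :: real
  have "\<forall>\<^sub>F L in at_top. norm (integral {a..b} (\<lambda>y. exp (- L * bennett_h y)) - sqrt (2 * pi / L) * (1 - 1 / (24 * L)))
      \<le> norm (B L)"
    using eventually_gt_at_top[of 0]
  proof eventually_elim
    case (elim L)
    with laplace_outer_bound[OF assms, of L] laplace_central_bound[of L]
    have "\<bar>integral {a..b} (\<lambda>y. exp (- L * bennett_h y)) - sqrt (2 * pi / L) * (1 - 1 / (24 * L))\<bar> \<le> B L"
      unfolding B_def by linarith
    then show ?case by simp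
  qed
  then have "(\<lambda>L. integral {a..b} (\<lambda>y. exp (- L * bennett_h y)) - sqrt (2 * pi / L) * (1 - 1 / (24 * L))) \<in> O(B)"
    by (rule landau_o.big_mono)
  also have "B \<in> O(\<lambda>L. L powr (-5/2))"
    unfolding B_def [abs_def] by real_asymp
  finally show ?thesis .
qed

lemma sd_f_asymptotic_error_eq:
  assumes "0 < t"
  defines "L \<equiv> t / exp 1"
  shows "sd_f t - sqrt (2 * pi * t / exp 1) * (1 - exp 1 / (24 * t)) * exp (t / exp 1)
    = L * exp L * (integral {-1..exp 1 - 1} (\<lambda>y. exp (- L * bennett_h y)) - sqrt (2 * pi / L) * (1 - 1 / (24 * L)))"
proof -
  have "0 < L" "t = exp 1 * L"
    using assms by simp_all
  then have "2 * pi * t / exp 1 = L^2 * (2 * pi / L)"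
    by (simp add: power2_eq_square)
  then have "sqrt (2 * pi * t / exp 1) = L * sqrt (2 * pi / L)"
    using \<open>0 < L\<close> by (simp only: real_sqrt_mult real_sqrt_abs abs_of_pos)
  moreover have "exp 1 / (24 * t) = 1 / (24 * L)"
    using \<open>t = exp 1 * L\<close> by simp
  moreover have "sd_f t = L * exp L * integral {-1..exp 1 - 1} (\<lambda>y. exp (- L * bennett_h y))"
    using sd_f_eq_laplace_integral[of L] \<open>t = exp 1 * L\<close> by simp
  ultimately show ?thesis
    unfolding L_def [symmetric] by (simp add: algebra_simps)
qed

theorem mainTheorem3:
  shows "(\<forall>t::real. (\<lambda>x. exp (- t * x * ln x)) integrable_on {0..1}
            \<and> sd_f t = t * integral {0..1} (\<lambda>x. exp (- t * x * ln x)))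
    \<and> ((\<lambda>t. sd_f t - sqrt (2 * pi * t / exp 1) * (1 - exp 1 / (24 * t)) * exp (t / exp 1))
        \<in> O[at_top](\<lambda>t. sqrt (2 * pi * t / exp 1) * t powr (-2) * exp (t / exp 1)))"
proof (intro conjI allI)
  fix t :: real
  show "(\<lambda>x. exp (- t * x * ln x)) integrable_on {0..1}"
    by (rule sophomores_dream(1))
  show "sd_f t = t * integral {0..1} (\<lambda>x. exp (- t * x * ln x))"
    by (rule sd_f_eq_integral)
next
  let ?error = "\<lambda>t. sd_f t - sqrt (2 * pi * t / exp 1) * (1 - exp 1 / (24 * t)) * exp (t / exp 1)"
  let ?rate = "\<lambda>t. t / exp 1 * exp (t / exp 1) * (t / exp 1) powr (-5/2)"
  define D where "D L = integral {-1..exp 1 - 1} (\<lambda>y. exp (- L * bennett_h y)) - sqrt (2 * pi / L) * (1 - 1 / (24 * L))"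
    for L :: real
  have "1/2 \<le> exp 1 - (1::real)"
    using exp_ge_add_one_self[of "1::real"] by simp
  then have "D \<in> O(\<lambda>L. L powr (-5/2))"
    unfolding D_def [abs_def] by (intro laplace_bennett_h_asymptotics) auto
  moreover have "filterlim (\<lambda>t::real. t / exp 1) at_top at_top"
    using filterlim_tendsto_pos_mult_at_top[OF tendsto_const _ filterlim_ident, of "1 / exp 1"]
    by (simp add: field_simps)
  ultimately have rescaled: "(\<lambda>t. t / exp 1 * exp (t / exp 1) * D (t / exp 1)) \<in> O(?rate)"
    by (rule landau_o.big.mult_left[OF landau_o.big.compose])
  have "\<forall>\<^sub>F t in at_top. ?error t = t / exp 1 * exp (t / exp 1) * D (t / exp 1)"
    using eventually_gt_at_top[of 0] by eventually_elim (simp add: D_def sd_f_asymptotic_error_eq)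
  from landau_o.big.in_cong[OF this] rescaled have "?error \<in> O(?rate)"
    by (rule iffD2)
  also have "?rate \<in> O(\<lambda>t. sqrt (2 * pi * t / exp 1) * t powr (-2) * exp (t / exp 1))"
    by real_asymp
  finally show "?error \<in> O(\<lambda>t. sqrt (2 * pi * t / exp 1) * t powr (-2) * exp (t / exp 1))" .
qed

end
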